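(* Let $1<p\le2$ and let $X$ be a real normed space of type $p$ with type $p$ constant $T_p(X)$. Let $A\subseteq X$ be approximately convex, $D=\operatorname{diam}(A)$, and $d=\mathcal{H}(A,\operatorname{Co}(A))$. If $d\ge2$, then $$D\ge\frac{8^{1/p}}{16\,T_p(X)}\,(2^d)^{(p-1)/p}$$ (with the right-hand side interpreted as $+\infty$ if $d=+\infty$).
   Context: $X$ has type $p$ if there is a constant $T_p(X)$ such that $\bigl(\mathbb{E}\|\sum_{i=1}^n\varepsilon_ix_i\|^p\bigr)^{1/p}\le T_p(X)\bigl(\sum_{i=1}^n\|x_i\|^p\bigr)^{1/p}$ for all $n$ and $x_1,\dots,x_n\in X$, where $(\varepsilon_i)$ are independent random signs with $P(\varepsilon_i=1)=P(\varepsilon_i=-1)=1/2$. A set $A$ is approximately convex if $d(tx+(1-t)y,A)\le1$ for all $x,y\in A$, $t\in[0,1]$, where $d(x,A)=\inf_{a\in A}\|x-a\|$. $\mathcal{H}$ is the Hausdorff distance, $\operatorname{Co}$ the convex hull, $\operatorname{diam}(A)=\sup\{\|x-y\|:x,y\in A\}$. *)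

theory Defs
  imports "HOL-Analysis.Analysis"
begin

text \<open>Rademacher average: the expectation over independent random signs
  eps_0,...,eps_(n-1) is the uniform average over all 2^n sign vectors.\<close>
definition sign_vectors :: "nat \<Rightarrow> (nat \<Rightarrow> real) set" where
  "sign_vectors n = PiE {..<n} (\<lambda>_. {-1, 1})"

definition is_type_const :: "real \<Rightarrow> real \<Rightarrow> 'a::real_normed_vector itself \<Rightarrow> bool" where
  "is_type_const p T _ \<longleftrightarrow>
     (\<forall>(n::nat) (x::nat \<Rightarrow> 'a).
        ((1 / 2 ^ n) * (\<Sum>\<epsilon>\<in>sign_vectors n. norm (\<Sum>i<n. \<epsilon> i *\<^sub>R x i) powr p)) powr (1 / p)
          \<le> T * (\<Sum>i<n. norm (x i) powr p) powr (1 / p))"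

definition approx_convex :: "'a::real_normed_vector set \<Rightarrow> bool" where
  "approx_convex A \<longleftrightarrow>
     (\<forall>x\<in>A. \<forall>y\<in>A. \<forall>t\<in>{0..1::real}. infdist (t *\<^sub>R x + (1 - t) *\<^sub>R y) A \<le> 1)"

text \<open>Diameter and Hausdorff distance with values in the extended reals
  (they may be +infinity for unbounded sets).\<close>
definition ediam :: "'a::metric_space set \<Rightarrow> ereal" where
  "ediam A = (SUP x\<in>A. SUP y\<in>A. ereal (dist x y))"

definition ehausdist :: "'a::metric_space set \<Rightarrow> 'a set \<Rightarrow> ereal" where
  "ehausdist A B = max (SUP a\<in>A. ereal (infdist a B)) (SUP b\<in>B. ereal (infdist b A))"

end

theory Submission
  imports Defs
begin

(* Averages of 2^k points of A lie within distance k of A, by iterating approximate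
   midpoint convexity. For an average of 2^(k+n) points the type p inequality does better:
   pairing the points and keeping one point of each pair, selected by a good sign vector
   for the differences, halves the number of points while moving the average by at most
   T D 2^(-q m) / 2, where q = (p-1)/p. Descending from 2^(k+n) to 2^k points thus costs a
   geometric sum. Dyadic averages are dense in Co(A), because their closure is closed and
   midpoint convex; so every point of Co(A) lies within k + T D 2^(-q k) / (2 (1 - 2^(-q)))
   of A. Taking k close to log_2(T D) / q gives d <= (log_2(T D) + 1) / q + 1, which
   rearranges to the lower bound on D. *)

definition dyadic_avg :: "nat \<Rightarrow> (nat \<Rightarrow> 'a::real_vector) \<Rightarrow> 'a" where
  "dyadic_avg n x = (1 / 2 ^ n) *\<^sub>R (\<Sum>i<2^n. x i)"

lemma sum_lessThan_double:
  fixes f :: "nat \<Rightarrow> 'b::comm_monoid_add"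
  shows "(\<Sum>i<2*m. f i) = (\<Sum>j<m. f (2*j) + f (2*j+1))"
  by (induction m) (simp_all add: add.assoc)

lemma dyadic_avg_Suc:
  "dyadic_avg (Suc n) x = midpoint (dyadic_avg n (\<lambda>j. x (2*j))) (dyadic_avg n (\<lambda>j. x (2*j+1)))"
  using sum_lessThan_double[of x "2^n"]
  by (simp add: dyadic_avg_def midpoint_def sum.distrib scaleR_add_right)

lemma dyadic_avg_stretch: "dyadic_avg (n + j) (\<lambda>i. x (i div 2^j)) = dyadic_avg n x"
proof (induction j)
  case (Suc j)
  have "\<And>i::nat. (2*i) div (2*2^j) = i div 2^j" "\<And>i::nat. Suc (2*i) div (2*2^j) = i div 2^j"
    by (simp_all add: div_mult2_eq)
  with Suc show ?case by (simp add: dyadic_avg_Suc)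
qed simp

lemma stretch_in:
  fixes x :: "nat \<Rightarrow> 'a"
  shows "\<forall>i<2^n. x i \<in> A \<Longrightarrow> \<forall>i<2^(n+j). x (i div 2^j) \<in> A"
  by (simp add: less_mult_imp_div_less power_add)

lemma infdist_lessE:
  assumes "A \<noteq> {}" "infdist u A < r"
  obtains a where "a \<in> A" "dist u a < r"
  using assms cINF_less_iff[of A "dist u" r] by (auto simp: infdist_notempty)

lemma dist_midpoint_le:
  fixes u v a b :: "'a::real_normed_vector"
  shows "dist (midpoint u v) (midpoint a b) \<le> (dist u a + dist v b) / 2"
proof -
  have "midpoint u v - midpoint a b = (1/2) *\<^sub>R ((u - a) + (v - b))"
    by (simp add: midpoint_def algebra_simps)
  then show ?thesis
    using norm_triangle_ineq[of "u - a" "v - b"] by (simp add: dist_norm)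
qed

lemma approx_convex_midpoint:
  assumes "approx_convex A" "a \<in> A" "b \<in> A"
  shows "infdist (midpoint a b) A \<le> 1"
proof -
  have "1/2 \<in> {0..1::real}" by simp
  with assms have "infdist ((1/2) *\<^sub>R a + (1 - 1/2) *\<^sub>R b) A \<le> 1"
    unfolding approx_convex_def by blast
  then show ?thesis by (simp add: midpoint_def scaleR_add_right)
qed

lemma infdist_midpoint_le:
  assumes ac: "approx_convex A" and u: "infdist u A \<le> r" and v: "infdist v A \<le> r"
  shows "infdist (midpoint u v) A \<le> r + 1"
proof (cases "A = {}")
  case False
  show ?thesis
  proof (rule field_le_epsilon)
    fix e :: real assume "0 < e"
    then have "infdist u A < r + e" "infdist v A < r + e"
      using u v by linarith+
    then obtain a b where ab: "a \<in> A" "dist u a < r + e" "b \<in> A" "dist v b < r + e"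
      using False by (meson infdist_lessE)
    have m: "infdist (midpoint a b) A \<le> 1"
      using approx_convex_midpoint[OF ac] ab by simp
    have "dist (midpoint u v) (midpoint a b) \<le> (dist u a + dist v b) / 2"
      by (rule dist_midpoint_le)
    with ab m infdist_triangle[of "midpoint u v" A "midpoint a b"]
    show "infdist (midpoint u v) A \<le> r + 1 + e" by argo
  qed
qed (use u in \<open>simp add: infdist_def\<close>)

lemma infdist_dyadic_avg_le:
  assumes "approx_convex A" "\<forall>i<2^k. x i \<in> A"
  shows "infdist (dyadic_avg k x) A \<le> real k"
  using assms(2)
proof (induction k arbitrary: x)
  case (Suc k)
  have "infdist (dyadic_avg k (\<lambda>j. x (2*j))) A \<le> real k"
    and "infdist (dyadic_avg k (\<lambda>j. x (2*j+1))) A \<le> real k"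
    using Suc.prems by (auto intro!: Suc.IH)
  from infdist_midpoint_le[OF assms(1) this] show ?case by (simp add: dyadic_avg_Suc)
qed (simp add: dyadic_avg_def)

lemma finite_sign_vectors: "finite (sign_vectors n)"
  unfolding sign_vectors_def by (simp add: finite_PiE)

lemma card_sign_vectors: "card (sign_vectors n) = 2^n"
  unfolding sign_vectors_def by (simp add: card_PiE numeral_2_eq_2)

lemma sign_vectors_not_empty: "sign_vectors n \<noteq> {}"
  using card_sign_vectors[of n] by auto

lemma sign_vectorsD: "\<epsilon> \<in> sign_vectors n \<Longrightarrow> i < n \<Longrightarrow> \<epsilon> i = 1 \<or> \<epsilon> i = -1"
  unfolding sign_vectors_def by (auto simp: PiE_iff)

lemma type_const_obtain_signs:
  fixes z :: "nat \<Rightarrow> 'a::real_normed_vector"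
  assumes tc: "is_type_const p T TYPE('a)" and p: "0 < p" and T: "0 \<le> T"
  obtains \<epsilon> where "\<epsilon> \<in> sign_vectors n"
    "norm (\<Sum>i<n. \<epsilon> i *\<^sub>R z i) \<le> T * (\<Sum>i<n. norm (z i) powr p) powr (1/p)"
proof (rule ccontr)
  assume "\<not> thesis"
  let ?c = "T * (\<Sum>i<n. norm (z i) powr p) powr (1/p)"
  let ?S = "sign_vectors n"
  have c: "0 \<le> ?c" using T by simp
  have "\<forall>\<epsilon>\<in>?S. ?c < norm (\<Sum>i<n. \<epsilon> i *\<^sub>R z i)"
    using \<open>\<not> thesis\<close> that by force
  then have "(\<Sum>\<epsilon>\<in>?S. ?c powr p) < (\<Sum>\<epsilon>\<in>?S. norm (\<Sum>i<n. \<epsilon> i *\<^sub>R z i) powr p)"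
    using c p by (intro sum_strict_mono finite_sign_vectors sign_vectors_not_empty powr_less_mono2) auto
  then have "?c powr p < (1 / 2 ^ n) * (\<Sum>\<epsilon>\<in>?S. norm (\<Sum>i<n. \<epsilon> i *\<^sub>R z i) powr p)"
    by (simp add: card_sign_vectors field_simps)
  then have "(?c powr p) powr (1/p) < ((1 / 2 ^ n) * (\<Sum>\<epsilon>\<in>?S. norm (\<Sum>i<n. \<epsilon> i *\<^sub>R z i) powr p)) powr (1/p)"
    using p c by (intro powr_less_mono2) auto
  also have "\<dots> \<le> ?c"
    using tc unfolding is_type_const_def sign_vectors_def by blast
  finally show False using p c by (simp add: powr_powr)
qed

lemma type_const_ge_1:
  fixes v :: "'a::real_normed_vector"
  assumes tc: "is_type_const p T TYPE('a)" and p: "0 < p" and v: "v \<noteq> 0"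
  shows "1 \<le> T"
proof -
  have "(\<Sum>\<epsilon>\<in>sign_vectors 1. norm (\<Sum>i<1. \<epsilon> i *\<^sub>R v) powr p) = (\<Sum>\<epsilon>\<in>sign_vectors 1. norm v powr p)"
    by (rule sum.cong) (auto dest: sign_vectorsD)
  then have "((1/2) * (2 * norm v powr p)) powr (1/p) \<le> T * (norm v powr p) powr (1/p)"
    using tc[unfolded is_type_const_def, rule_format, of 1 "\<lambda>_. v"] by (simp add: card_sign_vectors)
  then have "norm v \<le> T * norm v" using p by (simp add: powr_powr)
  then show ?thesis using v by simp
qed

lemma sum_norm_powr_root_le:
  fixes z :: "nat \<Rightarrow> 'a::real_normed_vector"
  assumes "\<And>j. j < N \<Longrightarrow> norm (z j) \<le> D" "0 < p" "0 \<le> D"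
  shows "(\<Sum>j<N. norm (z j) powr p) powr (1/p) \<le> real N powr (1/p) * D"
proof -
  have "(\<Sum>j<N. norm (z j) powr p) \<le> real N * D powr p"
    using sum_mono[of "{..<N}" "\<lambda>j. norm (z j) powr p" "\<lambda>_. D powr p"] assms
    by (simp add: powr_mono2)
  then have "(\<Sum>j<N. norm (z j) powr p) powr (1/p) \<le> (real N * D powr p) powr (1/p)"
    using assms(2) by (intro powr_mono2 sum_nonneg) auto
  also have "\<dots> = real N powr (1/p) * D"
    using assms(2,3) by (simp add: powr_mult powr_powr)
  finally show ?thesis .
qed

lemma two_power_powr_div:
  "(2 ^ m :: real) powr (1/p) / 2 ^ Suc m = (2 powr (1/p - 1)) ^ m / 2"
proof -
  have "(2 ^ m :: real) powr (1/p) = 2 powr (real m / p)"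
    by (simp add: powr_realpow[symmetric] powr_powr)
  moreover have "(2 powr (1/p - 1)) ^ m = 2 powr (real m / p - real m)"
    by (simp add: powr_power algebra_simps)
  moreover have "(2::real) powr (real m / p - real m) = 2 powr (real m / p) / 2 ^ m"
    by (simp add: powr_diff powr_realpow)
  ultimately show ?thesis by simp
qed

text \<open>Keeping from each pair \<open>x (2*j), x (2*j+1)\<close> the point selected by a good sign vector
  for the differences moves the average by \<open>norm (\<Sum>j. \<epsilon> j *\<^sub>R z j) / 2^Suc m\<close> only.\<close>
lemma dyadic_avg_Suc_select:
  fixes A :: "'a::real_normed_vector set"
  assumes tc: "is_type_const p T TYPE('a)" and p: "1 < p" and T: "0 \<le> T"
    and diam: "\<forall>a\<in>A. \<forall>b\<in>A. dist a b \<le> D"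
    and xA: "\<forall>i<2^Suc m. x i \<in> A"
  obtains y where "\<forall>j<2^m. y j \<in> A"
    "dist (dyadic_avg (Suc m) x) (dyadic_avg m y) \<le> T * D / 2 * (2 powr (1/p - 1)) ^ m"
proof -
  have "x 0 \<in> A" using xA by simp
  with diam have D: "0 \<le> D" by (metis zero_le_dist order_trans)
  define z where "z j = x (2*j) - x (2*j+1)" for j
  have pairs: "2*j < 2^Suc m" "2*j+1 < 2^Suc m" if "j < 2^m" for j :: nat
    using that by auto
  have nz: "norm (z j) \<le> D" if "j < 2^m" for j
    using pairs[OF that] xA diam by (simp add: z_def dist_norm)
  have "0 < p" using p by simp
  then obtain \<epsilon> where \<epsilon>: "\<epsilon> \<in> sign_vectors (2^m)"
    "norm (\<Sum>j<2^m. \<epsilon> j *\<^sub>R z j) \<le> T * (\<Sum>j<2^m. norm (z j) powr p) powr (1/p)"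
    by (rule type_const_obtain_signs[OF tc _ T])
  define y where "y j = (if \<epsilon> j = 1 then x (2*j) else x (2*j+1))" for j
  have "\<forall>j<2^m. y j \<in> A" using pairs xA by (simp add: y_def)
  moreover have "dist (dyadic_avg (Suc m) x) (dyadic_avg m y) \<le> T * D / 2 * (2 powr (1/p - 1)) ^ m"
  proof -
    have "2 *\<^sub>R y j = (x (2*j) + x (2*j+1)) + \<epsilon> j *\<^sub>R z j" if "j < 2^m" for j
      using sign_vectorsD[OF \<epsilon>(1) that] by (auto simp: y_def z_def algebra_simps scaleR_2)
    then have sum_y: "2 *\<^sub>R (\<Sum>j<2^m. y j) = (\<Sum>i<2^Suc m. x i) + (\<Sum>j<2^m. \<epsilon> j *\<^sub>R z j)"
      using sum_lessThan_double[of x "2^m"] by (simp add: scaleR_sum_right sum.distrib)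
    have "dyadic_avg m y = (1 / 2^Suc m) *\<^sub>R (2 *\<^sub>R (\<Sum>j<2^m. y j))"
      by (simp add: dyadic_avg_def)
    also have "\<dots> = dyadic_avg (Suc m) x + (1 / 2^Suc m) *\<^sub>R (\<Sum>j<2^m. \<epsilon> j *\<^sub>R z j)"
      unfolding sum_y by (simp add: dyadic_avg_def scaleR_add_right)
    finally have "dist (dyadic_avg (Suc m) x) (dyadic_avg m y) = norm (\<Sum>j<2^m. \<epsilon> j *\<^sub>R z j) / 2^Suc m"
      by (simp add: dist_norm)
    also have "\<dots> \<le> T * ((2^m) powr (1/p) * D) / 2^Suc m"
    proof (intro divide_right_mono)
      have "T * (\<Sum>j<2^m. norm (z j) powr p) powr (1/p) \<le> T * ((2^m) powr (1/p) * D)"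
        using sum_norm_powr_root_le[of "2^m" z D p] nz p D T by (intro mult_left_mono) auto
      with \<epsilon>(2) show "norm (\<Sum>j<2^m. \<epsilon> j *\<^sub>R z j) \<le> T * ((2^m) powr (1/p) * D)"
        by linarith
    qed simp
    also have "\<dots> = T * D / 2 * (2 powr (1/p - 1)) ^ m"
      using two_power_powr_div[of m p] by (simp add: field_simps)
    finally show ?thesis .
  qed
  ultimately show ?thesis using that by blast
qed

lemma infdist_dyadic_avg_type_le:
  fixes A :: "'a::real_normed_vector set"
  assumes tc: "is_type_const p T TYPE('a)" and p: "1 < p" and T: "0 \<le> T"
    and ac: "approx_convex A" and diam: "\<forall>a\<in>A. \<forall>b\<in>A. dist a b \<le> D"
    and xA: "\<forall>i<2^(k+n). x i \<in> A"
  shows "infdist (dyadic_avg (k+n) x) A \<le> real k + T * D / 2 * (\<Sum>j<n. (2 powr (1/p - 1)) ^ (k+j))"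
  using xA
proof (induction n arbitrary: x)
  case 0
  then show ?case using infdist_dyadic_avg_le[OF ac] by simp
next
  case (Suc n)
  obtain y where y: "\<forall>j<2^(k+n). y j \<in> A"
    and "dist (dyadic_avg (k + Suc n) x) (dyadic_avg (k+n) y) \<le> T * D / 2 * (2 powr (1/p - 1)) ^ (k+n)"
    using dyadic_avg_Suc_select[OF tc p T diam, of "k+n" x] Suc.prems by auto
  with Suc.IH[OF y] show ?case
    using infdist_triangle[of "dyadic_avg (k + Suc n) x" A "dyadic_avg (k+n) y"]
    by (simp add: distrib_left)
qed

definition dyadic_averages :: "'a::real_vector set \<Rightarrow> 'a set" where
  "dyadic_averages A = {dyadic_avg n x | n x. \<forall>i<2^n. x i \<in> A}"

lemma midpoint_dyadic_averages:
  assumes "u \<in> dyadic_averages A" "v \<in> dyadic_averages A"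
  shows "midpoint u v \<in> dyadic_averages A"
proof -
  obtain n x where u: "u = dyadic_avg n x" "\<forall>i<2^n. x i \<in> A"
    using assms(1) by (auto simp: dyadic_averages_def)
  obtain n' x' where v: "v = dyadic_avg n' x'" "\<forall>i<2^n'. x' i \<in> A"
    using assms(2) by (auto simp: dyadic_averages_def)
  define w where "w i = (if even i then x (i div 2 div 2^n') else x' (i div 2 div 2^n))" for i
  have "dyadic_avg (Suc (n+n')) w = midpoint u v"
    using dyadic_avg_stretch[of n n' x] dyadic_avg_stretch[of n' n x'] u v
    by (simp add: dyadic_avg_Suc w_def add.commute)
  moreover have "\<forall>i<2^Suc (n+n'). w i \<in> A"
    using stretch_in[OF u(2), of n'] stretch_in[OF v(2), of n]
    by (auto simp: w_def less_mult_imp_div_less add.commute)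
  ultimately show ?thesis unfolding dyadic_averages_def mem_Collect_eq by metis
qed

lemma midpoint_closure:
  fixes S :: "'a::real_normed_vector set"
  assumes "\<And>u v. u \<in> S \<Longrightarrow> v \<in> S \<Longrightarrow> midpoint u v \<in> S"
    and "x \<in> closure S" "y \<in> closure S"
  shows "midpoint x y \<in> closure S"
proof -
  have "continuous_on (closure (S \<times> S)) (\<lambda>z. midpoint (fst z) (snd z))"
    unfolding midpoint_def by (intro continuous_intros)
  moreover have "(\<lambda>z. midpoint (fst z) (snd z)) ` (S \<times> S) \<subseteq> closure S"
    using assms(1) closure_subset by fastforce
  ultimately have "(\<lambda>z. midpoint (fst z) (snd z)) ` closure (S \<times> S) \<subseteq> closure S"
    by (intro image_closure_subset) auto
  then show ?thesis using assms(2,3) by (force simp: closure_Times)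
qed

lemma midpoint_closed_imp_convex:
  fixes C :: "'a::real_normed_vector set"
  assumes "closed C" and mid: "\<And>u v. u \<in> C \<Longrightarrow> v \<in> C \<Longrightarrow> midpoint u v \<in> C"
  shows "convex C"
  unfolding convex_alt
proof (intro ballI allI impI)
  fix x y and t :: real
  assume x: "x \<in> C" and y: "y \<in> C" and t: "0 \<le> t \<and> t \<le> 1"
  define P where "P s = (1 - s) *\<^sub>R x + s *\<^sub>R y" for s :: real
  have P_midpoint: "midpoint (P a) (P b) = P ((a + b) / 2)" for a b
    unfolding P_def midpoint_def
    by (simp add: algebra_simps add_divide_distrib diff_divide_distrib flip: scaleR_add_left)
  have grid: "P (real m / 2^k) \<in> C" if "m \<le> 2^k" for k m
    using that
  proof (induction k arbitrary: m)
    case 0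
    then have "m = 0 \<or> m = 1" by auto
    then show ?case using x y by (auto simp: P_def)
  next
    case (Suc k)
    show ?case
    proof (cases "even m")
      case True
      then obtain l where "m = 2 * l" by auto
      with Suc.IH[of l] Suc.prems show ?thesis by simp
    next
      case False
      then obtain l where l: "m = 2 * l + 1" using oddE by blast
      with Suc.prems have "l \<le> 2^k" "l + 1 \<le> 2^k" by auto
      then have "P (real l / 2^k) \<in> C" "P (real (l+1) / 2^k) \<in> C"
        using Suc.IH by blast+
      moreover have "(real l / 2^k + real (l+1) / 2^k) / 2 = real m / 2^Suc k"
        by (simp add: l field_simps)
      ultimately show ?thesis using mid by (metis P_midpoint)
    qed
  qed
  have "{0..1} \<inter> (\<Union>k m. {real m / 2^k}) \<subseteq> {0..1} \<inter> P -` C"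
    using grid by (auto simp: field_simps)
  moreover have "closed ({0..1} \<inter> P -` C)"
    using \<open>closed C\<close> unfolding P_def by (intro continuous_closed_preimage continuous_intros) auto
  ultimately have "closure ({0..1} \<inter> (\<Union>k m. {real m / 2^k})) \<subseteq> {0..1} \<inter> P -` C"
    by (rule closure_minimal)
  then have "{0..1} \<subseteq> P -` C"
    using closure_dyadic_rationals_in_convex_set_pos_1[of "{0..1::real}"] by auto
  with t show "(1 - t) *\<^sub>R x + t *\<^sub>R y \<in> C" by (auto simp: P_def)
qed

lemma convex_hull_subset_closure_dyadic_averages:
  fixes A :: "'a::real_normed_vector set"
  shows "convex hull A \<subseteq> closure (dyadic_averages A)"
proof (rule hull_minimal)
  have "a = dyadic_avg 0 (\<lambda>_. a)" for a :: 'a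
    by (simp add: dyadic_avg_def)
  then have "A \<subseteq> dyadic_averages A"
    unfolding dyadic_averages_def by blast
  then show "A \<subseteq> closure (dyadic_averages A)"
    using closure_subset by blast
  show "convex (closure (dyadic_averages A))"
    by (intro midpoint_closed_imp_convex midpoint_closure midpoint_dyadic_averages) auto
qed

lemma infdist_convex_hull_le:
  fixes A :: "'a::real_normed_vector set"
  assumes tc: "is_type_const p T TYPE('a)" and p: "1 < p" and T: "0 \<le> T"
    and ac: "approx_convex A" and diam: "\<forall>a\<in>A. \<forall>b\<in>A. dist a b \<le> D"
    and b: "b \<in> convex hull A"
  defines "r \<equiv> 2 powr (1/p - 1)"
  shows "infdist b A \<le> real k + T * D / 2 * (r ^ k / (1 - r))"
proof (rule field_le_epsilon)
  fix e :: real assume "0 < e"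
  have r: "0 < r" "r < 1" using p by (auto simp: r_def powr_less_one)
  obtain u where "u \<in> dyadic_averages A" "dist u b < e"
    using b convex_hull_subset_closure_dyadic_averages \<open>0 < e\<close> closure_approachable by blast
  then obtain n x where u: "u = dyadic_avg n x" "\<forall>i<2^n. x i \<in> A" and ub: "dist u b < e"
    by (auto simp: dyadic_averages_def)
  have "x 0 \<in> A" using u(2) by simp
  with diam have D: "0 \<le> D" by (metis zero_le_dist order_trans)
  have "(\<Sum>j<n. r ^ (k+j)) = r ^ k * ((1 - r ^ n) / (1 - r))"
    using r by (simp add: power_add sum_gp_strict flip: sum_distrib_left)
  also have "\<dots> \<le> r ^ k * (1 / (1 - r))"
    using r by (intro mult_left_mono divide_right_mono) auto
  finally have "T * D / 2 * (\<Sum>j<n. r ^ (k+j)) \<le> T * D / 2 * (r ^ k / (1 - r))"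
    using T D by (intro mult_left_mono) auto
  moreover have "u = dyadic_avg (k+n) (\<lambda>i. x (i div 2^k))" "\<forall>i<2^(k+n). x (i div 2^k) \<in> A"
    using dyadic_avg_stretch[of n k x] stretch_in[OF u(2), of k] u by (simp_all add: add.commute)
  then have "infdist u A \<le> real k + T * D / 2 * (\<Sum>j<n. r ^ (k+j))"
    unfolding r_def using infdist_dyadic_avg_type_le[OF tc p T ac diam] by metis
  ultimately have "infdist u A \<le> real k + T * D / 2 * (r ^ k / (1 - r))"
    by linarith
  then show "infdist b A \<le> real k + T * D / 2 * (r ^ k / (1 - r)) + e"
    using infdist_triangle[of b A u] ub by (simp add: dist_commute)
qed

lemma div_one_minus_two_powr_le:
  fixes q :: real
  assumes "0 < q" "q \<le> 1/2"
  shows "q / (1 - 2 powr (-q)) \<le> 2"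
proof -
  define l where "l = ln (2::real)"
  have l: "2/3 \<le> l" unfolding l_def by (rule ln2_ge_two_thirds)
  have ql: "0 < q * l" using assms l by simp
  have "2 powr (-q) = inverse (exp (q * l))"
    by (simp add: powr_def l_def exp_minus)
  also have "\<dots> \<le> inverse (1 + q * l)"
    using ql exp_ge_add_one_self[of "q * l"] by (intro le_imp_inverse_le) auto
  finally have "q * l / (1 + q * l) \<le> 1 - 2 powr (-q)"
    using ql by (simp add: field_simps)
  then have "q / (1 - 2 powr (-q)) \<le> q / (q * l / (1 + q * l))"
    using assms(1) ql by (intro frac_le) auto
  also have "\<dots> = 1 / l + q"
    using assms(1) l by (simp add: field_simps)
  also have "\<dots> \<le> 3/2 + 1/2"
    using assms(2) l by (intro add_mono) (simp_all add: divide_simps)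
  finally show ?thesis by simp
qed

lemma infdist_convex_hull_le_log:
  fixes A :: "'a::real_normed_vector set"
  assumes tc: "is_type_const p T TYPE('a)" and p: "1 < p" "p \<le> 2" and T: "0 \<le> T"
    and ac: "approx_convex A" and diam: "\<forall>a\<in>A. \<forall>b\<in>A. dist a b \<le> D"
    and TD: "2 \<le> T * D" and b: "b \<in> convex hull A"
  shows "infdist b A \<le> (log 2 (T * D) + 1) / ((p - 1) / p) + 1"
proof -
  define q where "q = (p - 1) / p"
  define L where "L = log 2 (T * D)"
  define r :: real where "r = 2 powr (1/p - 1)"
  define k where "k = nat \<lceil>L / q\<rceil>"
  have q: "0 < q" "q \<le> 1/2" using p by (auto simp: q_def field_simps)
  have "1/p - 1 = -q" using p by (simp add: q_def field_simps)
  then have r: "r = 2 powr (-q)" "0 < r" "r < 1"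
    using q by (auto simp: r_def powr_less_one)
  have L: "1 \<le> L" using TD by (simp add: L_def)
  have "real k = of_int \<lceil>L / q\<rceil>"
    using q L by (simp add: k_def)
  then have "L / q \<le> real k" "real k \<le> L / q + 1"
    using ceiling_correct[of "L / q"] by linarith+
  then have k: "L \<le> q * k" "real k \<le> L / q + 1"
    using q by (simp_all add: field_simps)
  have "r ^ k = 2 powr (- (q * k))"
    by (simp add: r(1) powr_power algebra_simps)
  also have "\<dots> \<le> 2 powr (- L)"
    using k(1) by simp
  also have "\<dots> = 1 / (T * D)"
    using TD by (simp add: L_def powr_minus divide_inverse)
  finally have "T * D * r ^ k \<le> 1"
    using TD by (simp add: field_simps)
  then have "T * D / 2 * (r ^ k / (1 - r)) \<le> 1 / (2 * (1 - r))"
    using r by (simp add: divide_right_mono)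
  also have "\<dots> \<le> 1 / q"
    using div_one_minus_two_powr_le[OF q] q r by (simp add: field_simps)
  finally have "real k + T * D / 2 * (r ^ k / (1 - r)) \<le> (L + 1) / q + 1"
    using k(2) q by (simp add: add_divide_distrib)
  with infdist_convex_hull_le[OF tc p(1) T ac diam b, of k] show ?thesis
    by (simp add: L_def q_def r_def)
qed

lemma two_powr_bound_imp_diam_bound:
  fixes p T D d :: real
  assumes p: "1 < p" "p \<le> 2" and T: "0 < T" and TD: "2 \<le> T * D"
    and d: "d \<le> (log 2 (T * D) + 1) / ((p - 1) / p) + 1"
  shows "8 powr (1 / p) / (16 * T) * (2 powr d) powr ((p - 1) / p) \<le> D"
proof -
  define q where "q = (p - 1) / p"
  define L where "L = log 2 (T * D)"
  have q: "0 < q" "1 / p = 1 - q" using p by (auto simp: q_def field_simps)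
  have "d * q \<le> ((L + 1) / q + 1) * q"
    using d q by (intro mult_right_mono) (auto simp: L_def q_def)
  also have "\<dots> = L + 1 + q"
    using q by (simp add: field_simps)
  finally have dq: "d * q \<le> L + 1 + q" .
  have "(8::real) powr (1/p) = (2 powr 3) powr (1/p)"
    by (simp add: powr_numeral)
  also have "\<dots> = 2 powr (3 * (1 - q))"
    by (simp only: powr_powr q(2))
  finally have "8 powr (1/p) * (2 powr d) powr q = 2 powr (3 * (1 - q) + d * q)"
    by (simp add: powr_powr powr_add)
  also have "\<dots> \<le> 2 powr (4 - 2 * q + L)"
    using dq by simp
  also have "\<dots> \<le> 2 powr (4 + L)"
    using q by simp
  also have "\<dots> = 16 * (T * D)"
    using TD by (simp add: L_def powr_add)
  finally show ?thesis
    using T by (simp add: q_def field_simps)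
qed

lemma dist_le_ediam: "x \<in> A \<Longrightarrow> y \<in> A \<Longrightarrow> ereal (dist x y) \<le> ediam A"
  unfolding ediam_def by (rule SUP_upper2, assumption, rule SUP_upper)

lemma ediam_le: "(\<And>x y. x \<in> A \<Longrightarrow> y \<in> A \<Longrightarrow> dist x y \<le> D) \<Longrightarrow> ediam A \<le> ereal D"
  unfolding ediam_def by (intro SUP_least) simp

lemma ehausdist_convex_hull_le:
  fixes A :: "'a::real_normed_vector set"
  assumes "\<And>b. b \<in> convex hull A \<Longrightarrow> infdist b A \<le> M"
  shows "ehausdist A (convex hull A) \<le> ereal M"
  unfolding ehausdist_def
proof (rule max.boundedI)
  have "0 \<le> M" if "a \<in> A" for a
    using assms[OF hull_inc[OF that]] that by simp
  then show "(SUP a\<in>A. ereal (infdist a (convex hull A))) \<le> ereal M"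
    by (intro SUP_least) (simp add: hull_inc)
  show "(SUP b\<in>convex hull A. ereal (infdist b A)) \<le> ereal M"
    using assms(1) by (intro SUP_least) simp
qed

lemma ehausdist_convex_hull_le_ediam:
  fixes A :: "'a::real_normed_vector set"
  shows "ehausdist A (convex hull A) \<le> ediam A"
proof (cases "ediam A")
  case (real D)
  show ?thesis
  proof (cases "A = {}")
    case False
    then obtain a where a: "a \<in> A" by blast
    have diam: "dist x y \<le> D" if "x \<in> A" "y \<in> A" for x y
      using dist_le_ediam[OF that] real by simp
    then have "convex hull A \<subseteq> cball a D"
      using a by (intro hull_minimal) (auto simp: mem_cball)
    then have "infdist b A \<le> D" if "b \<in> convex hull A" for b
      using a that by (intro infdist_le2) (auto simp: mem_cball dist_commute)
    then show ?thesis
      using real ehausdist_convex_hull_le by auto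
  qed (simp add: ehausdist_def bot_ereal_def)
next
  case MInf
  then have "A = {}" using dist_le_ediam by fastforce
  then show ?thesis by (simp add: ehausdist_def bot_ereal_def)
qed simp

theorem theorem6p1:
  fixes A :: "'a::real_normed_vector set" and p T :: real
  assumes "1 < p" and "p \<le> 2"
    and "is_type_const p T TYPE('a)"
    and "approx_convex A"
    and "ehausdist A (convex hull A) \<ge> 2"
  shows "(ehausdist A (convex hull A) = \<infinity> \<longrightarrow> ediam A = \<infinity>) \<and>
         (\<forall>d::real. ehausdist A (convex hull A) = ereal d \<longrightarrow>
            ediam A \<ge> ereal (8 powr (1 / p) / (16 * T) * (2 powr d) powr ((p - 1) / p)))"
proof (cases "ediam A")
  case (real D)
  have diam: "\<forall>a\<in>A. \<forall>b\<in>A. dist a b \<le> D"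
    using dist_le_ediam real by fastforce
  have "ereal 2 \<le> ereal D"
    using assms(5) ehausdist_convex_hull_le_ediam[of A] real by (metis numeral_eq_ereal order_trans)
  then have D: "2 \<le> D" by simp
  obtain a b where "a \<in> A" "b \<in> A" "a \<noteq> b"
    using ediam_le[of A 0] real D by fastforce
  then have T: "1 \<le> T"
    using type_const_ge_1[OF assms(3), of "a - b"] assms(1) by simp
  have TD: "2 \<le> T * D"
    using mult_mono[OF T D] T by simp
  define R where "R = (log 2 (T * D) + 1) / ((p - 1) / p) + 1"
  have "ehausdist A (convex hull A) \<le> ereal R"
    using infdist_convex_hull_le_log[OF assms(3,1,2) _ assms(4) diam TD] T assms(1)
    by (intro ehausdist_convex_hull_le) (auto simp: R_def)
  then show ?thesis
    using two_powr_bound_imp_diam_bound[OF assms(1,2) _ TD] T real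
    by (auto simp: R_def)
qed (use assms(5) ehausdist_convex_hull_le_ediam[of A] in auto)

end
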